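(* The family $\mathcal C_n=\{C(w): w\in\mathcal W_n\}$ is a partition of $\mathcal W_n$.
   Context: Let $\mathcal A=\{a_1<a_2<\dots\}$ be a finite or countably infinite totally ordered alphabet. A word is primitive if it is not of the form $u^r$ with $r\ge 2$. $\mathcal W_n$ is the set of primitive words of length $n$ whose first letter is the smallest letter $a_w$ occurring in $w$ and whose last letter is different from $a_w$. Each $w\in\mathcal W_n$ decomposes uniquely as $w=B_1(w)\cdots B_{N}(w)$ into blocks, $N=N_n(w)$: each block begins with a run of $a_w$ and ends just before the next run of $a_w$. For a permutation $\sigma$ of $\{1,\dots,N\}$ set $\sigma.w=B_{\sigma(1)}(w)\cdots B_{\sigma(N)}(w)$, and $C(w)=\{\sigma.w:\sigma\in\mathfrak S_N,\ \sigma.w\in\mathcal W_n\}$. *)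

theory Defs
  imports "HOL-Library.Countable_Set" "HOL-Library.Disjoint_Sets" "HOL-Combinatorics.Permutations"
begin

definition primitive :: "'a list \<Rightarrow> bool" where
  "primitive w \<longleftrightarrow> \<not> (\<exists>u r. r \<ge> 2 \<and> w = concat (replicate r u))"

definition minlet :: "'a::linorder list \<Rightarrow> 'a" where
  "minlet w = Min (set w)"

definition Wn :: "'a::linorder set \<Rightarrow> nat \<Rightarrow> 'a list set" where
  "Wn A n = {w. set w \<subseteq> A \<and> length w = n \<and> primitive w \<and> w \<noteq> []
              \<and> hd w = minlet w \<and> last w \<noteq> minlet w}"

definition blocks :: "'a::linorder list \<Rightarrow> 'a list list" where
  "blocks w = (THE bs. concat bs = w \<and>
      (\<forall>b\<in>set bs. \<exists>k v. k \<ge> 1 \<and> v \<noteq> [] \<and> minlet w \<notin> set v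
                        \<and> b = replicate k (minlet w) @ v))"

definition nblocks :: "'a::linorder list \<Rightarrow> nat" where
  "nblocks w = length (blocks w)"

definition perm_act :: "(nat \<Rightarrow> nat) \<Rightarrow> 'a::linorder list \<Rightarrow> 'a list" where
  "perm_act \<sigma> w = concat (map (\<lambda>i. blocks w ! \<sigma> i) [0..<nblocks w])"

definition Cw :: "'a::linorder set \<Rightarrow> nat \<Rightarrow> 'a list \<Rightarrow> 'a list set" where
  "Cw A n w = {perm_act \<sigma> w | \<sigma>. \<sigma> permutes {..<nblocks w} \<and> perm_act \<sigma> w \<in> Wn A n}"

end

theory Submission
  imports Defs
begin

text \<open>Every word of \<open>Wn A n\<close> is the concatenation of its blocks, and this decomposition
is unique because the first block of a word is read off by two \<open>takeWhile\<close>s. Hence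
\<open>perm_act \<sigma> w\<close>, when it lies in \<open>Wn A n\<close>, has the permuted list of blocks of \<open>w\<close> as its
own block list, and conversely any word of \<open>Wn A n\<close> with the same multiset of blocks is
obtained from \<open>w\<close> by a permutation. So \<open>Cw A n w\<close> is the class of \<open>w\<close> under the equivalence
"same multiset of blocks", and these classes partition \<open>Wn A n\<close>.\<close>

definition is_block :: "'a \<Rightarrow> 'a list \<Rightarrow> bool" where
  "is_block a b \<longleftrightarrow> (\<exists>k v. k \<ge> 1 \<and> v \<noteq> [] \<and> a \<notin> set v \<and> b = replicate k a @ v)"

definition leading_block :: "'a \<Rightarrow> 'a list \<Rightarrow> 'a list" where
  "leading_block a w =
     takeWhile (\<lambda>x. x = a) w @ takeWhile (\<lambda>x. x \<noteq> a) (dropWhile (\<lambda>x. x = a) w)"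

lemma concat_blocks_Nil_or_hd:
  "\<forall>b\<in>set bs. is_block a b \<Longrightarrow> concat bs = [] \<or> hd (concat bs) = a"
  by (cases bs) (auto simp: is_block_def)

lemma leading_block_append:
  assumes "is_block a b" "r = [] \<or> hd r = a"
  shows "leading_block a (b @ r) = b"
proof -
  obtain k v where kv: "k \<ge> 1" "v \<noteq> []" "a \<notin> set v" "b = replicate k a @ v"
    using assms(1) unfolding is_block_def by blast
  then obtain x v' where "v = x # v'" "x \<noteq> a" by (cases v) auto
  then have "takeWhile (\<lambda>x. x = a) (b @ r) = replicate k a"
    and "dropWhile (\<lambda>x. x = a) (b @ r) = v @ r"
    using kv by (simp_all add: takeWhile_append dropWhile_append)
  moreover have "takeWhile (\<lambda>x. x \<noteq> a) (v @ r) = v"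
    using kv(3) assms(2) by (cases r) (auto simp: takeWhile_append)
  ultimately show ?thesis using kv(4) by (simp add: leading_block_def)
qed

lemma leading_block_split:
  assumes "w \<noteq> []" "hd w = a" "last w \<noteq> a"
  obtains r where "w = leading_block a w @ r" "is_block a (leading_block a w)"
    "r = [] \<or> (hd r = a \<and> last r \<noteq> a)" "length r < length w"
proof -
  define p where "p = takeWhile (\<lambda>x. x = a) w"
  define d where "d = dropWhile (\<lambda>x. x = a) w"
  define v where "v = takeWhile (\<lambda>x. x \<noteq> a) d"
  define r where "r = dropWhile (\<lambda>x. x \<noteq> a) d"
  have w: "w = p @ v @ r" and lb: "leading_block a w = p @ v"
    unfolding p_def d_def v_def r_def leading_block_def by simp_all
  have "p \<noteq> []" using assms(1,2) unfolding p_def by (cases w) auto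
  have "d \<noteq> []"
  proof
    assume "d = []"
    then have "last w \<in> set p"
      using assms(1) unfolding p_def d_def by (metis append_Nil2 last_in_set takeWhile_dropWhile_id)
    then show False using assms(3) unfolding p_def by (auto dest: set_takeWhileD)
  qed
  moreover have "hd d \<noteq> a" using \<open>d \<noteq> []\<close> hd_dropWhile[of "\<lambda>x. x = a" w] unfolding d_def by simp
  ultimately have "v \<noteq> []" unfolding v_def by (cases d) auto
  have p: "p = replicate (length p) a"
    by (rule replicate_length_same[symmetric]) (auto simp: p_def dest: set_takeWhileD)
  have "a \<notin> set v" unfolding v_def by (auto dest: set_takeWhileD)
  have "is_block a (p @ v)"
    unfolding is_block_def using \<open>p \<noteq> []\<close> \<open>v \<noteq> []\<close> \<open>a \<notin> set v\<close> p
    by (intro exI[of _ "length p"] exI[of _ v]) (simp add: Suc_le_eq)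
  moreover have "r = [] \<or> (hd r = a \<and> last r \<noteq> a)"
  proof (cases "r = []")
    case False
    then have "hd r = a" using hd_dropWhile[of "\<lambda>x. x \<noteq> a" d] unfolding r_def by simp
    moreover have "last r = last w" using False w by simp
    ultimately show ?thesis using assms(3) by simp
  qed simp
  moreover have "length r < length w" using w \<open>p \<noteq> []\<close> by simp
  ultimately show thesis using that w lb by simp
qed

lemma block_decomposition_exists:
  "w = [] \<or> (hd w = a \<and> last w \<noteq> a) \<Longrightarrow> \<exists>bs. concat bs = w \<and> (\<forall>b\<in>set bs. is_block a b)"
proof (induction "length w" arbitrary: w rule: less_induct)
  case less
  show ?case
  proof (cases "w = []")
    case False
    then obtain r where r: "w = leading_block a w @ r" "is_block a (leading_block a w)"
      "r = [] \<or> (hd r = a \<and> last r \<noteq> a)" "length r < length w"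
      using less.prems leading_block_split by metis
    then obtain bs where "concat bs = r" "\<forall>b\<in>set bs. is_block a b"
      using less.hyps by blast
    then show ?thesis using r by (intro exI[of _ "leading_block a w # bs"]) auto
  qed (intro exI[of _ "[]"], simp)
qed

lemma block_decomposition_unique:
  "\<forall>b\<in>set bs. is_block a b \<Longrightarrow> \<forall>c\<in>set cs. is_block a c \<Longrightarrow> concat bs = concat cs \<Longrightarrow> bs = cs"
proof (induction bs arbitrary: cs)
  case Nil
  then show ?case by (cases cs) (auto simp: is_block_def)
next
  case (Cons b bs)
  have b: "is_block a b" and bs: "\<forall>x\<in>set bs. is_block a x" using Cons.prems(1) by auto
  then have "b \<noteq> []" by (auto simp: is_block_def)
  then obtain c cs' where cs: "cs = c # cs'" using Cons.prems(3) by (cases cs) auto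
  have c: "is_block a c" and cs': "\<forall>x\<in>set cs'. is_block a x" using Cons.prems(2) cs by auto
  have "b = leading_block a (b @ concat bs)"
    using leading_block_append[OF b concat_blocks_Nil_or_hd[OF bs]] ..
  also have "\<dots> = leading_block a (c @ concat cs')" using Cons.prems(3) cs by simp
  also have "\<dots> = c" using leading_block_append[OF c concat_blocks_Nil_or_hd[OF cs']] .
  finally have "b = c" .
  then have "bs = cs'" using Cons.IH[OF bs cs'] Cons.prems(3) cs by simp
  then show ?case using \<open>b = c\<close> cs by simp
qed

lemma blocks_eq_iff:
  assumes "w \<noteq> []" "hd w = minlet w" "last w \<noteq> minlet w"
  shows "blocks w = bs \<longleftrightarrow> concat bs = w \<and> (\<forall>b\<in>set bs. is_block (minlet w) b)"
proof -
  let ?P = "\<lambda>bs. concat bs = w \<and> (\<forall>b\<in>set bs. is_block (minlet w) b)"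
  obtain cs where cs: "?P cs" using assms block_decomposition_exists[of w "minlet w"] by auto
  have unique: "\<exists>!bs. ?P bs"
  proof (rule ex1I[of _ cs])
    fix bs assume "?P bs"
    then show "bs = cs" using cs block_decomposition_unique[of bs "minlet w" cs] by simp
  qed (fact cs)
  have blocks_The: "blocks w = (THE bs. ?P bs)" unfolding blocks_def is_block_def ..
  show ?thesis
  proof
    assume "blocks w = bs"
    then show "?P bs" using theI'[OF unique] unfolding blocks_The by simp
  next
    assume "?P bs"
    then show "blocks w = bs" unfolding blocks_The by (rule the1_equality[OF unique])
  qed
qed

lemma Wn_hd_last: "w \<in> Wn A n \<Longrightarrow> w \<noteq> [] \<and> hd w = minlet w \<and> last w \<noteq> minlet w"
  unfolding Wn_def by auto

lemma perm_act_eq_concat_permute_list: "perm_act \<sigma> w = concat (permute_list \<sigma> (blocks w))"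
  unfolding perm_act_def permute_list_def nblocks_def by simp

lemma Cw_eq_same_mset_blocks:
  assumes "w \<in> Wn A n"
  shows "Cw A n w = {v \<in> Wn A n. mset (blocks v) = mset (blocks w)}"
proof (intro set_eqI iffI)
  fix v assume "v \<in> Cw A n w"
  then obtain \<sigma> where \<sigma>: "\<sigma> permutes {..<length (blocks w)}" "v = perm_act \<sigma> w" "v \<in> Wn A n"
    unfolding Cw_def nblocks_def by blast
  let ?bs = "permute_list \<sigma> (blocks w)"
  have mset_bs: "mset ?bs = mset (blocks w)" using \<sigma>(1) by simp
  then have set_bs: "set ?bs = set (blocks w)" by (rule mset_eq_setD)
  have v: "v = concat ?bs" using \<sigma>(2) perm_act_eq_concat_permute_list by simp
  have w: "concat (blocks w) = w" "\<forall>b\<in>set (blocks w). is_block (minlet w) b"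
    using blocks_eq_iff Wn_hd_last[OF assms] by blast+
  have "set v = set (concat (blocks w))" using v set_bs by simp
  then have minlet_v: "minlet v = minlet w" using w(1) by (simp add: minlet_def)
  have v_props: "v \<noteq> []" "hd v = minlet v" "last v \<noteq> minlet v"
    using Wn_hd_last[OF \<sigma>(3)] by auto
  have "blocks v = ?bs"
    unfolding blocks_eq_iff[OF v_props] minlet_v using v[symmetric] w(2) set_bs by simp
  then show "v \<in> {v \<in> Wn A n. mset (blocks v) = mset (blocks w)}" using mset_bs \<sigma>(3) by simp
next
  fix v assume "v \<in> {v \<in> Wn A n. mset (blocks v) = mset (blocks w)}"
  then have v: "v \<in> Wn A n" "mset (blocks v) = mset (blocks w)" by auto
  obtain p where p: "p permutes {..<length (blocks w)}" "permute_list p (blocks w) = blocks v"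
    using mset_eq_permutation[OF v(2)] by blast
  have "perm_act p w = concat (blocks v)" by (simp only: perm_act_eq_concat_permute_list p(2))
  also have "\<dots> = v" using blocks_eq_iff Wn_hd_last[OF v(1)] by blast
  finally show "v \<in> Cw A n w" unfolding Cw_def nblocks_def using p(1) v(1) by blast
qed

lemma partition_on_fibres: "partition_on X {{y \<in> X. f y = f x} | x. x \<in> X}"
  unfolding partition_on_def disjoint_def by auto

theorem proposition2:
  fixes A :: "'a::linorder set" and n :: nat
  assumes "countable A"
  shows "partition_on (Wn A n) {Cw A n w | w. w \<in> Wn A n}"
proof -
  have "{Cw A n w | w. w \<in> Wn A n} =
    {{v \<in> Wn A n. mset (blocks v) = mset (blocks w)} | w. w \<in> Wn A n}"
    using Cw_eq_same_mset_blocks by blast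
  then show ?thesis by (simp only: partition_on_fibres)
qed

end
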